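(* Let $n\ge2$, let $c=(c_{i,j})$ be an $n\times(n+1)$ matrix with entries in $\{0,1\}$, $\sigma_1,\ldots,\sigma_n>0$, $\gamma_1,\ldots,\gamma_{n+1}>0$. Let $\mathbf{X}=(X_1,\ldots,X_n)'$ have decumulative distribution function \[ \mathbf{P}[X_1>x_1,\ldots,X_n>x_n]=\prod_{j=1}^{n+1}\left(1+\sum_{i=1}^n\frac{c_{i,j}}{\sigma_i}x_i\right)^{-\gamma_j},\quad (x_1,\ldots,x_n)'\in(0,\infty)^n. \] Let $1\le k\ne l\le n$ with $\gamma^\ast_{c,k}=\sum_jc_{k,j}\gamma_j>2$ and $\gamma^\ast_{c,l}=\sum_jc_{l,j}\gamma_j>2$. Then the Pearson correlation satisfies $\mathbf{Corr}[X_k,X_l]\in[0,1/2)$. *)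

theory Defs
  imports "HOL-Probability.Probability"
begin

definition covariance :: "'a measure \<Rightarrow> ('a \<Rightarrow> real) \<Rightarrow> ('a \<Rightarrow> real) \<Rightarrow> real" where
  "covariance M X Y =
     (LINT \<omega>|M. (X \<omega> - (LINT \<eta>|M. X \<eta>)) * (Y \<omega> - (LINT \<eta>|M. Y \<eta>)))"

definition pearson_corr :: "'a measure \<Rightarrow> ('a \<Rightarrow> real) \<Rightarrow> ('a \<Rightarrow> real) \<Rightarrow> real" where
  "pearson_corr M X Y = covariance M X Y / sqrt (covariance M X X * covariance M Y Y)"

end

theory Submission
  imports Defs
begin

text \<open>
  Put Y_i = X_i / \<sigma>_i. Setting the other coordinates to 0 in the survival function shows that Y_k has
  the Lomax tail (1 + u) powr -\<alpha> with \<alpha> = \<gamma>*_{c,k}, hence mean 1/(\<alpha>-1) and variance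
  \<alpha>/((\<alpha>-1)^2 (\<alpha>-2)). Since every c_{i,j} is 0 or 1, comparing the joint survival function
  S(u,v) = \<Prod>_j (1 + c_{k,j} u + c_{l,j} v) powr -\<gamma>_j factor by factor gives
  (1+u) powr -\<alpha> * (1+v) powr -\<beta> \<le> S(u,v) \<le> (1+v) powr (\<alpha>-\<beta>) * (1+u+v) powr -\<alpha>.
  By Hoeffding's formula E[Y_k Y_l] = \<integral>\<integral> S, so for \<alpha> \<le> \<beta> the covariance lies between 0 and
  1/((\<alpha>-1)(\<beta>-1)(\<beta>-2)), and the bound 1/2 on the correlation reduces to 4(\<alpha>-2) < \<alpha>\<beta>(\<beta>-2).
\<close>

section \<open>Integrals over the half-line and the quadrant\<close>

definition quadrant_nn_integral :: "(real \<Rightarrow> real \<Rightarrow> real) \<Rightarrow> ennreal" where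
  "quadrant_nn_integral f =
     (\<integral>\<^sup>+s. (\<integral>\<^sup>+t. ennreal (f s t) * indicator {0..} t \<partial>lborel) * indicator {0..} s \<partial>lborel)"

lemma quadrant_nn_integral_cong:
  assumes "\<And>s t. 0 \<le> s \<Longrightarrow> 0 \<le> t \<Longrightarrow> f s t = g s t"
  shows "quadrant_nn_integral f = quadrant_nn_integral g"
  unfolding quadrant_nn_integral_def
  by (auto intro!: nn_integral_cong simp: assms split: split_indicator)

lemma quadrant_nn_integral_mono:
  assumes "\<And>s t. 0 \<le> s \<Longrightarrow> 0 \<le> t \<Longrightarrow> f s t \<le> g s t"
  shows "quadrant_nn_integral f \<le> quadrant_nn_integral g"
  unfolding quadrant_nn_integral_def
  by (auto intro!: nn_integral_mono ennreal_leI simp: assms split: split_indicator)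

lemma quadrant_nn_integral_iterated:
  assumes "\<And>s. 0 \<le> s \<Longrightarrow> (\<integral>\<^sup>+t. ennreal (f s t) * indicator {0..} t \<partial>lborel) = ennreal (g s)"
  shows "quadrant_nn_integral f = (\<integral>\<^sup>+s. ennreal (g s) * indicator {0..} s \<partial>lborel)"
  unfolding quadrant_nn_integral_def
  by (intro nn_integral_cong) (simp add: assms split: split_indicator)

lemma tendsto_shifted_powr_at_top:
  assumes "e < 0"
  shows "((\<lambda>t::real. (c + t) powr e) \<longlongrightarrow> 0) at_top"
  by (rule tendsto_neg_powr[OF assms filterlim_tendsto_add_at_top[OF tendsto_const filterlim_ident]])

lemma nn_integral_shifted_powr_atLeast:
  fixes \<alpha> c a :: real
  assumes "\<alpha> > 1" "c + a > 0"
  shows "(\<integral>\<^sup>+t. ennreal ((c + t) powr - \<alpha>) * indicator {a..} t \<partial>lborel)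
           = ennreal ((c + a) powr (1 - \<alpha>) / (\<alpha> - 1))"
proof -
  define F where "F t = (c + t) powr (1 - \<alpha>) / (1 - \<alpha>)" for t
  have "(\<integral>\<^sup>+t. ennreal ((c + t) powr - \<alpha>) * indicator {a..} t \<partial>lborel) = 0 - F a"
  proof (rule nn_integral_FTC_atLeast)
    fix x assume "a \<le> x"
    then have "c + x > 0" using assms by linarith
    then have "(F has_real_derivative (1 - \<alpha>) * (c + x) powr (- \<alpha>) / (1 - \<alpha>)) (at x)"
      unfolding F_def by (auto intro!: derivative_eq_intros)
    then show "(F has_real_derivative (c + x) powr - \<alpha>) (at x)"
      using assms by simp
  next
    have "((\<lambda>t. (c + t) powr (1 - \<alpha>)) \<longlongrightarrow> 0) at_top"
      using assms by (intro tendsto_shifted_powr_at_top) simp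
    then show "(F \<longlongrightarrow> 0) at_top"
      unfolding F_def by (rule tendsto_divide_zero)
  qed auto
  also have "0 - F a = (c + a) powr (1 - \<alpha>) / (\<alpha> - 1)"
    by (simp add: F_def divide_simps algebra_simps)
  finally show ?thesis .
qed

lemma nn_integral_lomax_tail:
  fixes \<alpha> :: real
  assumes "\<alpha> > 1"
  shows "(\<integral>\<^sup>+s. ennreal ((1 + s) powr - \<alpha>) * indicator {0..} s \<partial>lborel) = ennreal (1 / (\<alpha> - 1))"
  using nn_integral_shifted_powr_atLeast[of \<alpha> 1 0] assms by simp

lemma nn_integral_scaled_lomax_tail:
  fixes a \<alpha> :: real
  assumes "0 \<le> a" "\<alpha> > 1"
  shows "(\<integral>\<^sup>+s. ennreal (a * (1 + s) powr - \<alpha>) * indicator {0..} s \<partial>lborel) = ennreal (a / (\<alpha> - 1))"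
proof -
  have "(\<integral>\<^sup>+s. ennreal (a * (1 + s) powr - \<alpha>) * indicator {0..} s \<partial>lborel)
      = ennreal a * (\<integral>\<^sup>+s. ennreal ((1 + s) powr - \<alpha>) * indicator {0..} s \<partial>lborel)"
    using assms by (simp add: ennreal_mult' mult.assoc nn_integral_cmult)
  then show ?thesis
    using assms by (simp add: nn_integral_lomax_tail ennreal_mult'[symmetric])
qed

lemma nn_integral_times_lomax_tail:
  fixes \<alpha> :: real
  assumes "\<alpha> > 2"
  shows "(\<integral>\<^sup>+s. ennreal (s * (1 + s) powr - \<alpha>) * indicator {0..} s \<partial>lborel)
           = ennreal (1 / ((\<alpha> - 1) * (\<alpha> - 2)))"
proof -
  define F where "F s = (1 + s) powr (2 - \<alpha>) / (2 - \<alpha>) - (1 + s) powr (1 - \<alpha>) / (1 - \<alpha>)"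
    for s :: real
  have "(\<integral>\<^sup>+s. ennreal (s * (1 + s) powr - \<alpha>) * indicator {0..} s \<partial>lborel) = 0 - F 0"
  proof (rule nn_integral_FTC_atLeast)
    fix x :: real assume "0 \<le> x"
    then have pos: "1 + x > 0" by linarith
    have "(F has_real_derivative
            (2 - \<alpha>) * (1 + x) powr (1 - \<alpha>) / (2 - \<alpha>) - (1 - \<alpha>) * (1 + x) powr - \<alpha> / (1 - \<alpha>)) (at x)"
      unfolding F_def using pos assms by (auto intro!: derivative_eq_intros)
    moreover have "(2 - \<alpha>) * (1 + x) powr (1 - \<alpha>) / (2 - \<alpha>) - (1 - \<alpha>) * (1 + x) powr - \<alpha> / (1 - \<alpha>)
                     = (1 + x) powr (1 - \<alpha>) - (1 + x) powr - \<alpha>"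
      using assms by simp
    moreover have "(1 + x) powr (1 - \<alpha>) = (1 + x) * (1 + x) powr - \<alpha>"
      using pos powr_add[of "1 + x" 1 "- \<alpha>"] by simp
    ultimately show "(F has_real_derivative x * (1 + x) powr - \<alpha>) (at x)"
      by (simp add: algebra_simps)
  next
    have "((\<lambda>t. (1 + t) powr (2 - \<alpha>)) \<longlongrightarrow> 0) at_top" "((\<lambda>t. (1 + t) powr (1 - \<alpha>)) \<longlongrightarrow> 0) at_top"
      using assms by (auto intro: tendsto_shifted_powr_at_top)
    then show "(F \<longlongrightarrow> 0) at_top"
      unfolding F_def using tendsto_diff[OF tendsto_divide_zero tendsto_divide_zero] by fastforce
  qed auto
  also have "0 - F 0 = 1 / ((\<alpha> - 1) * (\<alpha> - 2))"
    using assms by (simp add: F_def field_simps)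
  finally show ?thesis .
qed

lemma nn_integral_lomax_tail_max:
  fixes \<alpha> s :: real
  assumes "\<alpha> > 1" "s \<ge> 0"
  shows "(\<integral>\<^sup>+t. ennreal ((1 + max s t) powr - \<alpha>) * indicator {0..} t \<partial>lborel)
           = ennreal (s * (1 + s) powr - \<alpha>) + ennreal ((1 + s) powr (1 - \<alpha>) / (\<alpha> - 1))"
proof -
  have "(\<integral>\<^sup>+t. ennreal ((1 + max s t) powr - \<alpha>) * indicator {0..} t \<partial>lborel)
      = (\<integral>\<^sup>+t. ennreal ((1 + s) powr - \<alpha>) * indicator {0..<s} t
                 + ennreal ((1 + t) powr - \<alpha>) * indicator {s..} t \<partial>lborel)"
    using assms by (intro nn_integral_cong) (auto simp: indicator_def max_def)
  also have "\<dots> = (\<integral>\<^sup>+t. ennreal ((1 + s) powr - \<alpha>) * indicator {0..<s} t \<partial>lborel)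
                  + (\<integral>\<^sup>+t. ennreal ((1 + t) powr - \<alpha>) * indicator {s..} t \<partial>lborel)"
    by (rule nn_integral_add) auto
  also have "(\<integral>\<^sup>+t. ennreal ((1 + s) powr - \<alpha>) * indicator {0..<s} t \<partial>lborel)
      = ennreal ((1 + s) powr - \<alpha>) * ennreal s"
    using assms by (simp add: nn_integral_cmult)
  also have "\<dots> = ennreal (s * (1 + s) powr - \<alpha>)"
    using assms by (simp add: ennreal_mult' mult.commute)
  also have "(\<integral>\<^sup>+t. ennreal ((1 + t) powr - \<alpha>) * indicator {s..} t \<partial>lborel)
      = ennreal ((1 + s) powr (1 - \<alpha>) / (\<alpha> - 1))"
    using assms by (intro nn_integral_shifted_powr_atLeast) auto
  finally show ?thesis .
qed

lemma quadrant_nn_integral_lomax_tail_max: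
  fixes \<alpha> :: real
  assumes "\<alpha> > 2"
  shows "quadrant_nn_integral (\<lambda>s t. (1 + max s t) powr - \<alpha>) = ennreal (2 / ((\<alpha> - 1) * (\<alpha> - 2)))"
proof -
  have split_tail: "ennreal ((1 + s) powr (1 - \<alpha>) / (\<alpha> - 1))
      = ennreal (1 / (\<alpha> - 1)) * ennreal ((1 + s) powr - (\<alpha> - 1))" for s :: real
    using assms by (subst ennreal_mult'[symmetric]) (auto simp: divide_simps)
  have "quadrant_nn_integral (\<lambda>s t. (1 + max s t) powr - \<alpha>)
      = (\<integral>\<^sup>+s. ennreal (s * (1 + s) powr - \<alpha>) * indicator {0..} s
                 + ennreal (1 / (\<alpha> - 1)) * (ennreal ((1 + s) powr - (\<alpha> - 1)) * indicator {0..} s) \<partial>lborel)"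
    unfolding quadrant_nn_integral_def
  proof (intro nn_integral_cong)
    fix s :: real
    show "(\<integral>\<^sup>+t. ennreal ((1 + max s t) powr - \<alpha>) * indicator {0..} t \<partial>lborel) * indicator {0..} s
        = ennreal (s * (1 + s) powr - \<alpha>) * indicator {0..} s
          + ennreal (1 / (\<alpha> - 1)) * (ennreal ((1 + s) powr - (\<alpha> - 1)) * indicator {0..} s)"
      using assms by (cases "0 \<le> s") (simp_all add: nn_integral_lomax_tail_max split_tail)
  qed
  also have "\<dots> = ennreal (1 / ((\<alpha> - 1) * (\<alpha> - 2))) + ennreal (1 / (\<alpha> - 1)) * ennreal (1 / (\<alpha> - 2))"
    using assms nn_integral_lomax_tail[of "\<alpha> - 1"]
    by (subst nn_integral_add) (auto simp: nn_integral_cmult nn_integral_times_lomax_tail)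
  also have "\<dots> = ennreal (2 / ((\<alpha> - 1) * (\<alpha> - 2)))"
    using assms by (simp add: ennreal_mult'[symmetric] flip: ennreal_plus)
  finally show ?thesis .
qed

lemma quadrant_nn_integral_lomax_tail_product:
  fixes \<alpha> \<beta> :: real
  assumes "\<alpha> > 1" "\<beta> > 1"
  shows "quadrant_nn_integral (\<lambda>s t. (1 + t) powr - \<alpha> * (1 + s) powr - \<beta>)
           = ennreal (1 / ((\<alpha> - 1) * (\<beta> - 1)))"
proof -
  have "quadrant_nn_integral (\<lambda>s t. (1 + t) powr - \<alpha> * (1 + s) powr - \<beta>)
      = (\<integral>\<^sup>+s. ennreal ((1 + s) powr - \<beta> / (\<alpha> - 1)) * indicator {0..} s \<partial>lborel)"
    using assms by (intro quadrant_nn_integral_iterated)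
      (simp add: mult.commute[of "_ powr - \<alpha>"] nn_integral_scaled_lomax_tail)
  also have "\<dots> = ennreal (1 / ((\<alpha> - 1) * (\<beta> - 1)))"
    using assms nn_integral_scaled_lomax_tail[of "1 / (\<alpha> - 1)" \<beta>] by simp
  finally show ?thesis .
qed

lemma quadrant_nn_integral_lomax_upper_envelope:
  fixes \<alpha> \<beta> :: real
  assumes "\<alpha> > 1" "\<beta> > 2"
  shows "quadrant_nn_integral (\<lambda>s t. (1 + s) powr (\<alpha> - \<beta>) * (1 + s + t) powr - \<alpha>)
           = ennreal (1 / ((\<alpha> - 1) * (\<beta> - 2)))"
proof -
  have inner: "(\<integral>\<^sup>+t. ennreal ((1 + s) powr (\<alpha> - \<beta>) * (1 + s + t) powr - \<alpha>) * indicator {0..} t \<partial>lborel)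
      = ennreal ((1 + s) powr (1 - \<beta>) / (\<alpha> - 1))" if "0 \<le> s" for s :: real
  proof -
    have "(\<integral>\<^sup>+t. ennreal ((1 + s) powr (\<alpha> - \<beta>) * (1 + s + t) powr - \<alpha>) * indicator {0..} t \<partial>lborel)
        = ennreal ((1 + s) powr (\<alpha> - \<beta>)) * (\<integral>\<^sup>+t. ennreal ((1 + s + t) powr - \<alpha>) * indicator {0..} t \<partial>lborel)"
      by (simp add: ennreal_mult' mult.assoc nn_integral_cmult)
    also have "\<dots> = ennreal ((1 + s) powr (\<alpha> - \<beta>) * ((1 + s) powr (1 - \<alpha>) / (\<alpha> - 1)))"
      using assms that by (simp add: nn_integral_shifted_powr_atLeast ennreal_mult'[symmetric])
    also have "(1 + s) powr (\<alpha> - \<beta>) * ((1 + s) powr (1 - \<alpha>) / (\<alpha> - 1)) = (1 + s) powr (1 - \<beta>) / (\<alpha> - 1)"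
      by (simp add: powr_add[symmetric])
    finally show ?thesis .
  qed
  have "quadrant_nn_integral (\<lambda>s t. (1 + s) powr (\<alpha> - \<beta>) * (1 + s + t) powr - \<alpha>)
      = (\<integral>\<^sup>+s. ennreal ((1 + s) powr (1 - \<beta>) / (\<alpha> - 1)) * indicator {0..} s \<partial>lborel)"
    by (rule quadrant_nn_integral_iterated) (rule inner)
  also have "\<dots> = ennreal (1 / ((\<alpha> - 1) * (\<beta> - 2)))"
    using assms nn_integral_scaled_lomax_tail[of "1 / (\<alpha> - 1)" "\<beta> - 1"] by simp
  finally show ?thesis .
qed

section \<open>Moments as integrals of survival functions\<close>

lemma ennreal_eq_nn_integral_indicator_Ico: "ennreal (z::real) = (\<integral>\<^sup>+s. indicator {0..<z} s \<partial>lborel)"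
  by (cases "z > 0") (simp_all add: emeasure_lborel_Ico ennreal_neg)

lemma nn_integral_mult_eq_iterated_emeasure:
  assumes M: "sigma_finite_measure M" and Z: "Z \<in> borel_measurable M" and W: "W \<in> borel_measurable M"
  shows "(\<integral>\<^sup>+\<omega>. ennreal (Z \<omega>) * ennreal (W \<omega>) \<partial>M) =
    (\<integral>\<^sup>+s. \<integral>\<^sup>+t. emeasure M {\<omega>\<in>space M. 0 \<le> s \<and> s < Z \<omega> \<and> 0 \<le> t \<and> t < W \<omega>}
       \<partial>lborel \<partial>lborel)"
proof -
  interpret P: pair_sigma_finite M lborel
    using M by (simp add: lborel.sigma_finite_measure_axioms pair_sigma_finite.intro)
  define f where "f = (\<lambda>\<omega> s t. indicator {0..<Z \<omega>} s * indicator {0..<W \<omega>} t :: ennreal)"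
  have f_measurable: "(\<lambda>(\<omega>, t). f \<omega> s t) \<in> borel_measurable (M \<Otimes>\<^sub>M lborel)" for s
    unfolding f_def indicator_def atLeastLessThan_iff using Z W by measurable
  have "(\<integral>\<^sup>+\<omega>. ennreal (Z \<omega>) * ennreal (W \<omega>) \<partial>M)
      = (\<integral>\<^sup>+\<omega>. \<integral>\<^sup>+s. \<integral>\<^sup>+t. f \<omega> s t \<partial>lborel \<partial>lborel \<partial>M)"
  proof (rule nn_integral_cong)
    fix \<omega>
    have "(\<integral>\<^sup>+s. \<integral>\<^sup>+t. f \<omega> s t \<partial>lborel \<partial>lborel)
        = (\<integral>\<^sup>+s. indicator {0..<Z \<omega>} s * (\<integral>\<^sup>+t. indicator {0..<W \<omega>} t \<partial>lborel) \<partial>lborel)"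
      unfolding f_def by (subst nn_integral_cmult) auto
    also have "\<dots> = (\<integral>\<^sup>+s. indicator {0..<Z \<omega>} s \<partial>lborel)
                      * (\<integral>\<^sup>+t. indicator {0..<W \<omega>} t \<partial>lborel)"
      by (subst nn_integral_multc) auto
    finally show "ennreal (Z \<omega>) * ennreal (W \<omega>) = (\<integral>\<^sup>+s. \<integral>\<^sup>+t. f \<omega> s t \<partial>lborel \<partial>lborel)"
      by (simp only: ennreal_eq_nn_integral_indicator_Ico[symmetric])
  qed
  also have "\<dots> = (\<integral>\<^sup>+s. \<integral>\<^sup>+\<omega>. \<integral>\<^sup>+t. f \<omega> s t \<partial>lborel \<partial>M \<partial>lborel)"
    apply (rule P.Fubini'[symmetric])
    unfolding f_def indicator_def atLeastLessThan_iff using Z W by measurable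
  also have "\<dots> = (\<integral>\<^sup>+s. \<integral>\<^sup>+t. \<integral>\<^sup>+\<omega>. f \<omega> s t \<partial>M \<partial>lborel \<partial>lborel)"
  proof (intro nn_integral_cong)
    fix s :: real
    show "(\<integral>\<^sup>+\<omega>. \<integral>\<^sup>+t. f \<omega> s t \<partial>lborel \<partial>M) = (\<integral>\<^sup>+t. \<integral>\<^sup>+\<omega>. f \<omega> s t \<partial>M \<partial>lborel)"
      using P.Fubini'[OF f_measurable[of s], symmetric] .
  qed
  also have "\<dots> = (\<integral>\<^sup>+s. \<integral>\<^sup>+t. emeasure M {\<omega>\<in>space M. 0 \<le> s \<and> s < Z \<omega> \<and> 0 \<le> t \<and> t < W \<omega>}
                      \<partial>lborel \<partial>lborel)"
  proof (intro nn_integral_cong)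
    fix s t :: real
    define A where "A = {\<omega>\<in>space M. 0 \<le> s \<and> s < Z \<omega> \<and> 0 \<le> t \<and> t < W \<omega>}"
    have "A \<in> sets M"
      unfolding A_def using Z W by measurable
    moreover have "(\<integral>\<^sup>+\<omega>. f \<omega> s t \<partial>M) = (\<integral>\<^sup>+\<omega>. indicator A \<omega> \<partial>M)"
      by (rule nn_integral_cong) (auto simp: f_def A_def split: split_indicator)
    ultimately show "(\<integral>\<^sup>+\<omega>. f \<omega> s t \<partial>M) = emeasure M A"
      by simp
  qed
  finally show ?thesis .
qed

lemma nn_integral_mult_eq_quadrant_survival:
  assumes M: "finite_measure M" and Z: "Z \<in> borel_measurable M" and W: "W \<in> borel_measurable M"
  shows "(\<integral>\<^sup>+\<omega>. ennreal (Z \<omega>) * ennreal (W \<omega>) \<partial>M)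
           = quadrant_nn_integral (\<lambda>s t. measure M {\<omega>\<in>space M. s < Z \<omega> \<and> t < W \<omega>})"
proof -
  interpret finite_measure M by fact
  have events: "{\<omega>\<in>space M. s < Z \<omega> \<and> t < W \<omega>} \<in> sets M" for s t
    using Z W by measurable
  show ?thesis
    unfolding nn_integral_mult_eq_iterated_emeasure[OF sigma_finite_measure Z W] quadrant_nn_integral_def
  proof (intro nn_integral_cong)
    fix s :: real
    show "(\<integral>\<^sup>+t. emeasure M {\<omega>\<in>space M. 0 \<le> s \<and> s < Z \<omega> \<and> 0 \<le> t \<and> t < W \<omega>} \<partial>lborel)
        = (\<integral>\<^sup>+t. ennreal (measure M {\<omega>\<in>space M. s < Z \<omega> \<and> t < W \<omega>}) * indicator {0..} t \<partial>lborel)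
            * indicator {0..} s"
    proof (cases "0 \<le> s")
      case True
      then show ?thesis
        by (simp, intro nn_integral_cong) (simp add: emeasure_eq_measure events split: split_indicator)
    qed simp
  qed
qed

lemma nn_integral_eq_survival_integral:
  assumes M: "finite_measure M" and Z: "Z \<in> borel_measurable M"
  shows "(\<integral>\<^sup>+\<omega>. ennreal (Z \<omega>) \<partial>M)
           = (\<integral>\<^sup>+s. ennreal (measure M {\<omega>\<in>space M. s < Z \<omega>}) * indicator {0..} s \<partial>lborel)"
proof -
  have "(\<integral>\<^sup>+\<omega>. ennreal (Z \<omega>) \<partial>M)
      = quadrant_nn_integral (\<lambda>s t. measure M {\<omega>\<in>space M. s < Z \<omega> \<and> t < 1})"
    using nn_integral_mult_eq_quadrant_survival[OF M Z borel_measurable_const[of 1]]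
    by (simp only: ennreal_1 mult_1_right)
  also have "\<dots> = (\<integral>\<^sup>+s. ennreal (measure M {\<omega>\<in>space M. s < Z \<omega>}) * indicator {0..} s \<partial>lborel)"
    unfolding quadrant_nn_integral_def
  proof (intro nn_integral_cong)
    fix s :: real
    have "(\<integral>\<^sup>+t. ennreal (measure M {\<omega>\<in>space M. s < Z \<omega> \<and> t < (1::real)}) * indicator {0..} t \<partial>lborel)
        = (\<integral>\<^sup>+t. ennreal (measure M {\<omega>\<in>space M. s < Z \<omega>}) * indicator {0..<1::real} t \<partial>lborel)"
      by (intro nn_integral_cong) (auto simp: indicator_def)
    also have "\<dots> = ennreal (measure M {\<omega>\<in>space M. s < Z \<omega>})"
      by (simp add: nn_integral_cmult)
    finally show "(\<integral>\<^sup>+t. ennreal (measure M {\<omega>\<in>space M. s < Z \<omega> \<and> t < (1::real)}) * indicator {0..} t \<partial>lborel)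
          * indicator {0..} s = ennreal (measure M {\<omega>\<in>space M. s < Z \<omega>}) * indicator {0..} s"
      by (rule arg_cong)
  qed
  finally show ?thesis .
qed

lemma covariance_eq:
  assumes "prob_space M"
    and "has_bochner_integral M X a" "has_bochner_integral M Y b"
    and "has_bochner_integral M (\<lambda>\<omega>. X \<omega> * Y \<omega>) p"
  shows "covariance M X Y = p - a * b"
proof -
  interpret prob_space M by fact
  have "covariance M X Y = (LINT \<omega>|M. (X \<omega> * Y \<omega> - b * X \<omega>) - (a * Y \<omega> - a * b))"
    unfolding covariance_def using assms(2,3)
    by (intro Bochner_Integration.integral_cong) (auto simp: has_bochner_integral_integral_eq algebra_simps)
  also have "\<dots> = p - a * b"
    using assms(2-4) by (simp add: has_bochner_integral_iff prob_space)
  finally show ?thesis .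
qed

lemma covariance_scale:
  "covariance M (\<lambda>\<omega>. p * X \<omega>) (\<lambda>\<omega>. q * Y \<omega>) = p * q * covariance M X Y"
proof -
  have "covariance M (\<lambda>\<omega>. p * X \<omega>) (\<lambda>\<omega>. q * Y \<omega>)
      = (LINT \<omega>|M. (p * q) * ((X \<omega> - (LINT \<eta>|M. X \<eta>)) * (Y \<omega> - (LINT \<eta>|M. Y \<eta>))))"
    unfolding covariance_def by (simp add: algebra_simps)
  then show ?thesis
    unfolding covariance_def by simp
qed

lemma pearson_corr_scale:
  assumes "p > 0" "q > 0"
  shows "pearson_corr M (\<lambda>\<omega>. p * X \<omega>) (\<lambda>\<omega>. q * Y \<omega>) = pearson_corr M X Y"
proof -
  have "(p * p * covariance M X X) * (q * q * covariance M Y Y)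
      = (p * q)\<^sup>2 * (covariance M X X * covariance M Y Y)"
    by (simp add: power2_eq_square ac_simps)
  then show ?thesis
    using assms by (simp add: pearson_corr_def covariance_scale real_sqrt_mult)
qed

lemma pearson_corr_commute: "pearson_corr M X Y = pearson_corr M Y X"
  unfolding pearson_corr_def covariance_def by (simp add: mult.commute)

section \<open>Lomax distributed random variables\<close>

definition lomax_distributed :: "'a measure \<Rightarrow> ('a \<Rightarrow> real) \<Rightarrow> real \<Rightarrow> bool" where
  "lomax_distributed M Z \<alpha> \<longleftrightarrow> Z \<in> borel_measurable M \<and>
     (\<forall>u\<ge>0. measure M {\<omega>\<in>space M. u < Z \<omega>} = (1 + u) powr - \<alpha>)"

lemma lomax_distributed_AE_pos:
  assumes "prob_space M" "lomax_distributed M Z \<alpha>"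
  shows "AE \<omega> in M. 0 < Z \<omega>"
proof -
  interpret prob_space M by fact
  have "{\<omega>\<in>space M. 0 < Z \<omega>} \<in> events" "prob {\<omega>\<in>space M. 0 < Z \<omega>} = 1"
    using assms(2) unfolding lomax_distributed_def by auto
  then show ?thesis by (simp add: prob_Collect_eq_1)
qed

lemma lomax_distributed_mean:
  assumes "prob_space M" "lomax_distributed M Z \<alpha>" "\<alpha> > 1"
  shows "has_bochner_integral M Z (1 / (\<alpha> - 1))"
proof (rule has_bochner_integral_nn_integral)
  show Z: "Z \<in> borel_measurable M"
    using assms(2) by (simp add: lomax_distributed_def)
  show "AE \<omega> in M. 0 \<le> Z \<omega>"
    using lomax_distributed_AE_pos[OF assms(1,2)] by auto
  have "(\<integral>\<^sup>+\<omega>. ennreal (Z \<omega>) \<partial>M) = (\<integral>\<^sup>+s. ennreal ((1 + s) powr - \<alpha>) * indicator {0..} s \<partial>lborel)"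
    using assms(2) unfolding nn_integral_eq_survival_integral[OF prob_space.finite_measure[OF assms(1)] Z]
    by (intro nn_integral_cong) (auto simp: lomax_distributed_def split: split_indicator)
  then show "(\<integral>\<^sup>+\<omega>. ennreal (Z \<omega>) \<partial>M) = ennreal (1 / (\<alpha> - 1))"
    using assms(3) by (simp add: nn_integral_lomax_tail)
qed (use assms(3) in simp)

lemma lomax_distributed_second_moment:
  assumes "prob_space M" "lomax_distributed M Z \<alpha>" "\<alpha> > 2"
  shows "has_bochner_integral M (\<lambda>\<omega>. Z \<omega> * Z \<omega>) (2 / ((\<alpha> - 1) * (\<alpha> - 2)))"
proof (rule has_bochner_integral_nn_integral)
  have Z: "Z \<in> borel_measurable M"
    using assms(2) by (simp add: lomax_distributed_def)
  then show "(\<lambda>\<omega>. Z \<omega> * Z \<omega>) \<in> borel_measurable M"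
    by measurable
  have AE: "AE \<omega> in M. 0 < Z \<omega>"
    using lomax_distributed_AE_pos[OF assms(1,2)] .
  then show "AE \<omega> in M. 0 \<le> Z \<omega> * Z \<omega>"
    by eventually_elim simp
  have "(\<integral>\<^sup>+\<omega>. ennreal (Z \<omega> * Z \<omega>) \<partial>M) = (\<integral>\<^sup>+\<omega>. ennreal (Z \<omega>) * ennreal (Z \<omega>) \<partial>M)"
    using AE by (intro nn_integral_cong_AE) (auto simp: ennreal_mult)
  also have "\<dots> = quadrant_nn_integral (\<lambda>s t. measure M {\<omega>\<in>space M. s < Z \<omega> \<and> t < Z \<omega>})"
    using nn_integral_mult_eq_quadrant_survival[OF prob_space.finite_measure[OF assms(1)] Z Z] .
  also have "\<dots> = quadrant_nn_integral (\<lambda>s t. (1 + max s t) powr - \<alpha>)"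
  proof (rule quadrant_nn_integral_cong)
    fix s t :: real assume "0 \<le> s" "0 \<le> t"
    have "{\<omega>\<in>space M. s < Z \<omega> \<and> t < Z \<omega>} = {\<omega>\<in>space M. max s t < Z \<omega>}"
      by auto
    then show "measure M {\<omega>\<in>space M. s < Z \<omega> \<and> t < Z \<omega>} = (1 + max s t) powr - \<alpha>"
      using assms(2) \<open>0 \<le> s\<close> unfolding lomax_distributed_def by (metis max.coboundedI1)
  qed
  also have "\<dots> = ennreal (2 / ((\<alpha> - 1) * (\<alpha> - 2)))"
    using assms(3) by (rule quadrant_nn_integral_lomax_tail_max)
  finally show "(\<integral>\<^sup>+\<omega>. ennreal (Z \<omega> * Z \<omega>) \<partial>M) = ennreal (2 / ((\<alpha> - 1) * (\<alpha> - 2)))" .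
qed (use assms(3) in simp)

lemma lomax_distributed_variance:
  assumes "prob_space M" "lomax_distributed M Z \<alpha>" "\<alpha> > 2"
  shows "covariance M Z Z = \<alpha> / ((\<alpha> - 1)\<^sup>2 * (\<alpha> - 2))"
proof -
  have "covariance M Z Z = 2 / ((\<alpha> - 1) * (\<alpha> - 2)) - 1 / (\<alpha> - 1) * (1 / (\<alpha> - 1))"
    using assms by (intro covariance_eq lomax_distributed_mean lomax_distributed_second_moment) auto
  also have "\<dots> = \<alpha> / ((\<alpha> - 1)\<^sup>2 * (\<alpha> - 2))"
    using assms(3) by (simp add: divide_simps power2_eq_square)
  finally show ?thesis .
qed

lemma lomax_pair_product_moment:
  assumes M: "prob_space M" and Y: "lomax_distributed M Y \<alpha>" and Z: "lomax_distributed M Z \<beta>"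
    and "\<alpha> > 1" "\<beta> > 2"
    and lower: "\<And>u v. 0 \<le> u \<Longrightarrow> 0 \<le> v \<Longrightarrow>
                 (1 + u) powr - \<alpha> * (1 + v) powr - \<beta> \<le> measure M {\<omega>\<in>space M. u < Y \<omega> \<and> v < Z \<omega>}"
    and upper: "\<And>u v. 0 \<le> u \<Longrightarrow> 0 \<le> v \<Longrightarrow>
                 measure M {\<omega>\<in>space M. u < Y \<omega> \<and> v < Z \<omega>} \<le> (1 + v) powr (\<alpha> - \<beta>) * (1 + v + u) powr - \<alpha>"
  obtains p where "has_bochner_integral M (\<lambda>\<omega>. Y \<omega> * Z \<omega>) p"
    and "1 / ((\<alpha> - 1) * (\<beta> - 1)) \<le> p" and "p \<le> 1 / ((\<alpha> - 1) * (\<beta> - 2))"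
proof -
  have Ym: "Y \<in> borel_measurable M" and Zm: "Z \<in> borel_measurable M"
    using Y Z by (simp_all add: lomax_distributed_def)
  have AE: "AE \<omega> in M. 0 < Y \<omega> \<and> 0 < Z \<omega>"
    using lomax_distributed_AE_pos[OF M Y] lomax_distributed_AE_pos[OF M Z] by eventually_elim simp
  define I where "I = (\<integral>\<^sup>+\<omega>. ennreal (Y \<omega> * Z \<omega>) \<partial>M)"
  \<comment> \<open>The level of Z is the outer variable: in this order the upper envelope integrates in closed form.\<close>
  have I: "I = quadrant_nn_integral (\<lambda>s t. measure M {\<omega>\<in>space M. t < Y \<omega> \<and> s < Z \<omega>})"
  proof -
    have "I = (\<integral>\<^sup>+\<omega>. ennreal (Z \<omega>) * ennreal (Y \<omega>) \<partial>M)"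
      unfolding I_def using AE by (intro nn_integral_cong_AE) (auto simp: ennreal_mult mult.commute)
    then show ?thesis
      by (simp add: nn_integral_mult_eq_quadrant_survival[OF prob_space.finite_measure[OF M] Zm Ym] conj_commute)
  qed
  have "ennreal (1 / ((\<alpha> - 1) * (\<beta> - 1))) \<le> I"
    using assms(4,5) quadrant_nn_integral_lomax_tail_product[of \<alpha> \<beta>]
      quadrant_nn_integral_mono[of "\<lambda>s t. (1 + t) powr - \<alpha> * (1 + s) powr - \<beta>"] lower
    unfolding I by simp
  moreover have "I \<le> ennreal (1 / ((\<alpha> - 1) * (\<beta> - 2)))"
    using assms(4,5) quadrant_nn_integral_lomax_upper_envelope[of \<alpha> \<beta>]
      quadrant_nn_integral_mono[of _ "\<lambda>s t. (1 + s) powr (\<alpha> - \<beta>) * (1 + s + t) powr - \<alpha>"] upper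
    unfolding I by simp
  ultimately obtain p where p: "I = ennreal p" "0 \<le> p"
    "1 / ((\<alpha> - 1) * (\<beta> - 1)) \<le> p" "p \<le> 1 / ((\<alpha> - 1) * (\<beta> - 2))"
    using assms(4,5) by (cases I) (auto simp: ennreal_le_iff top_unique)
  have "has_bochner_integral M (\<lambda>\<omega>. Y \<omega> * Z \<omega>) p"
    using Ym Zm AE p(1,2) unfolding I_def
    by (intro has_bochner_integral_nn_integral) auto
  from this p(3,4) show ?thesis by (rule that)
qed

lemma lomax_corr_bound:
  fixes \<alpha> \<beta> r :: real
  assumes "2 < \<alpha>" "\<alpha> \<le> \<beta>" "0 \<le> r" "r \<le> 1 / ((\<alpha> - 1) * (\<beta> - 1) * (\<beta> - 2))"
  defines "v \<equiv> \<alpha> / ((\<alpha> - 1)\<^sup>2 * (\<alpha> - 2)) * (\<beta> / ((\<beta> - 1)\<^sup>2 * (\<beta> - 2)))"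
  shows "0 \<le> r / sqrt v \<and> r / sqrt v < 1 / 2"
proof -
  obtain a b c d where abcd: "a = \<alpha> - 1" "b = \<beta> - 1" "c = \<beta> - 2" "d = \<alpha> - 2"
    and pos: "a > 0" "b > 0" "c > 0" "d > 0"
    using assms(1,2) by simp
  define P where "P = a\<^sup>2 * d * b\<^sup>2 * c\<^sup>2"
  have P: "P > 0"
    unfolding P_def using pos by simp
  have "4 * d < (\<alpha> * \<beta>) * d"
    using assms(1,2) pos mult_strict_mono[of 2 \<alpha> 2 \<beta>] by (intro mult_strict_right_mono) auto
  also have "\<dots> \<le> \<alpha> * \<beta> * c"
    using assms(1,2) abcd by (intro mult_left_mono) auto
  finally have "4 * d / P < \<alpha> * \<beta> * c / P"
    using P by (rule divide_strict_right_mono)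
  moreover have "(2 / (a * b * c))\<^sup>2 = 4 * d / P" "v = \<alpha> * \<beta> * c / P"
    unfolding P_def v_def abcd(1-4)[symmetric] using pos by (simp_all add: field_simps power2_eq_square)
  ultimately have "2 / (a * b * c) < sqrt v"
    by (intro real_less_rsqrt) simp
  moreover have "2 * r \<le> 2 / (a * b * c)"
    using assms(4) abcd by simp
  ultimately have "2 * r < sqrt v"
    by linarith
  moreover have "0 < v"
    unfolding v_def using assms(1,2) by simp
  ultimately show ?thesis
    using assms(3) by (simp add: divide_less_eq)
qed

lemma pearson_corr_lomax_pair:
  assumes M: "prob_space M" and Y: "lomax_distributed M Y \<alpha>" and Z: "lomax_distributed M Z \<beta>"
    and "2 < \<alpha>" "\<alpha> \<le> \<beta>"
    and "\<And>u v. 0 \<le> u \<Longrightarrow> 0 \<le> v \<Longrightarrow>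
           (1 + u) powr - \<alpha> * (1 + v) powr - \<beta> \<le> measure M {\<omega>\<in>space M. u < Y \<omega> \<and> v < Z \<omega>}"
    and "\<And>u v. 0 \<le> u \<Longrightarrow> 0 \<le> v \<Longrightarrow>
           measure M {\<omega>\<in>space M. u < Y \<omega> \<and> v < Z \<omega>} \<le> (1 + v) powr (\<alpha> - \<beta>) * (1 + v + u) powr - \<alpha>"
  shows "0 \<le> pearson_corr M Y Z \<and> pearson_corr M Y Z < 1 / 2"
proof -
  obtain p where p: "has_bochner_integral M (\<lambda>\<omega>. Y \<omega> * Z \<omega>) p"
    "1 / ((\<alpha> - 1) * (\<beta> - 1)) \<le> p" "p \<le> 1 / ((\<alpha> - 1) * (\<beta> - 2))"
    using lomax_pair_product_moment[OF M Y Z] assms(4-7) by auto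
  have "covariance M Y Z = p - 1 / (\<alpha> - 1) * (1 / (\<beta> - 1))"
    using assms(4,5) by (intro covariance_eq M p(1) lomax_distributed_mean Y Z) auto
  moreover have "1 / ((\<alpha> - 1) * (\<beta> - 2)) - 1 / ((\<alpha> - 1) * (\<beta> - 1)) = 1 / ((\<alpha> - 1) * (\<beta> - 1) * (\<beta> - 2))"
    using assms(4,5) by (simp add: divide_simps)
  ultimately show ?thesis
    using lomax_corr_bound[OF assms(4,5), of "p - 1 / ((\<alpha> - 1) * (\<beta> - 1))"] p(2,3) assms(4,5)
    by (simp add: pearson_corr_def lomax_distributed_variance[OF M Y] lomax_distributed_variance[OF M Z])
qed

section \<open>Products of Pareto factors\<close>

lemma powr_neg_mult_le_powr_neg_add:
  fixes x y \<gamma> :: real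
  assumes "0 \<le> x" "0 \<le> y" "0 \<le> \<gamma>"
  shows "(1 + x) powr - \<gamma> * (1 + y) powr - \<gamma> \<le> (1 + x + y) powr - \<gamma>"
proof -
  have "(1 + x) powr - \<gamma> * (1 + y) powr - \<gamma> = ((1 + x) * (1 + y)) powr - \<gamma>"
    using assms by (simp add: powr_mult)
  also have "\<dots> \<le> (1 + x + y) powr - \<gamma>"
    using assms by (intro powr_mono2') (auto simp: algebra_simps)
  finally show ?thesis .
qed

lemma powr_neg_01_le:
  fixes a b \<gamma> u v :: real
  assumes "a \<in> {0, 1}" "b \<in> {0, 1}" "0 \<le> \<gamma>" "0 \<le> u" "0 \<le> v"
  shows "(1 + a * u + b * v) powr - \<gamma> \<le> (1 + v) powr ((a - b) * \<gamma>) * (1 + v + u) powr - (a * \<gamma>)"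
proof -
  have "(1 + u) powr - \<gamma> = (1 / (1 + u)) powr \<gamma>"
    using assms by (simp add: powr_minus_divide powr_divide)
  also have "\<dots> \<le> ((1 + v) / (1 + v + u)) powr \<gamma>"
    using assms by (intro powr_mono2) (auto simp: field_simps)
  also have "\<dots> = (1 + v) powr \<gamma> * (1 + v + u) powr - \<gamma>"
    using assms by (simp add: powr_divide powr_minus_divide)
  finally have "(1 + u) powr - \<gamma> \<le> (1 + v) powr \<gamma> * (1 + v + u) powr - \<gamma>" .
  then show ?thesis
    using assms by (auto simp: add_ac)
qed

lemma prod_powr_neg_01:
  fixes a \<gamma> :: "'i \<Rightarrow> real" and u :: real
  assumes "finite J" "\<And>j. j \<in> J \<Longrightarrow> a j \<in> {0, 1}" "0 \<le> u"
  shows "(\<Prod>j\<in>J. (1 + a j * u) powr - \<gamma> j) = (1 + u) powr - (\<Sum>j\<in>J. a j * \<gamma> j)"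
proof -
  have "(\<Prod>j\<in>J. (1 + a j * u) powr - \<gamma> j) = (\<Prod>j\<in>J. (1 + u) powr - (a j * \<gamma> j))"
  proof (rule prod.cong)
    fix j assume "j \<in> J"
    then consider "a j = 0" | "a j = 1"
      using assms(2) by auto
    then show "(1 + a j * u) powr - \<gamma> j = (1 + u) powr - (a j * \<gamma> j)"
      using assms(3) by cases auto
  qed simp
  also have "\<dots> = (1 + u) powr - (\<Sum>j\<in>J. a j * \<gamma> j)"
    using assms(1,3) by (simp add: powr_sum sum_negf[symmetric])
  finally show ?thesis .
qed

lemma prod_powr_neg_01_lower:
  fixes a b \<gamma> :: "'i \<Rightarrow> real" and u v :: real
  assumes "finite J" "\<And>j. j \<in> J \<Longrightarrow> a j \<in> {0, 1}" "\<And>j. j \<in> J \<Longrightarrow> b j \<in> {0, 1}"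
    and "\<And>j. j \<in> J \<Longrightarrow> 0 \<le> \<gamma> j" "0 \<le> u" "0 \<le> v"
  shows "(1 + u) powr - (\<Sum>j\<in>J. a j * \<gamma> j) * (1 + v) powr - (\<Sum>j\<in>J. b j * \<gamma> j)
           \<le> (\<Prod>j\<in>J. (1 + a j * u + b j * v) powr - \<gamma> j)"
proof -
  have "(1 + u) powr - (\<Sum>j\<in>J. a j * \<gamma> j) * (1 + v) powr - (\<Sum>j\<in>J. b j * \<gamma> j)
      = (\<Prod>j\<in>J. (1 + a j * u) powr - \<gamma> j * (1 + b j * v) powr - \<gamma> j)"
    using assms by (simp add: prod_powr_neg_01 prod.distrib)
  also have "\<dots> \<le> (\<Prod>j\<in>J. (1 + a j * u + b j * v) powr - \<gamma> j)"
  proof (rule prod_mono)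
    fix j assume "j \<in> J"
    then have "0 \<le> a j" "0 \<le> b j" "0 \<le> \<gamma> j"
      using assms(2-4) by force+
    then show "0 \<le> (1 + a j * u) powr - \<gamma> j * (1 + b j * v) powr - \<gamma> j \<and>
        (1 + a j * u) powr - \<gamma> j * (1 + b j * v) powr - \<gamma> j \<le> (1 + a j * u + b j * v) powr - \<gamma> j"
      using assms(5,6) by (simp add: powr_neg_mult_le_powr_neg_add)
  qed
  finally show ?thesis .
qed

lemma prod_powr_neg_01_upper:
  fixes a b \<gamma> :: "'i \<Rightarrow> real" and u v :: real
  assumes "finite J" "\<And>j. j \<in> J \<Longrightarrow> a j \<in> {0, 1}" "\<And>j. j \<in> J \<Longrightarrow> b j \<in> {0, 1}"
    and "\<And>j. j \<in> J \<Longrightarrow> 0 \<le> \<gamma> j" "0 \<le> u" "0 \<le> v"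
  shows "(\<Prod>j\<in>J. (1 + a j * u + b j * v) powr - \<gamma> j)
           \<le> (1 + v) powr ((\<Sum>j\<in>J. a j * \<gamma> j) - (\<Sum>j\<in>J. b j * \<gamma> j))
             * (1 + v + u) powr - (\<Sum>j\<in>J. a j * \<gamma> j)"
proof -
  have "(\<Prod>j\<in>J. (1 + a j * u + b j * v) powr - \<gamma> j)
      \<le> (\<Prod>j\<in>J. (1 + v) powr ((a j - b j) * \<gamma> j) * (1 + v + u) powr - (a j * \<gamma> j))"
    using assms by (intro prod_mono) (auto intro: powr_neg_01_le)
  also have "\<dots> = (1 + v) powr ((\<Sum>j\<in>J. a j * \<gamma> j) - (\<Sum>j\<in>J. b j * \<gamma> j))
                  * (1 + v + u) powr - (\<Sum>j\<in>J. a j * \<gamma> j)"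
    using assms(1,5,6)
    by (simp add: prod.distrib powr_sum sum_negf[symmetric] sum_subtractf[symmetric] left_diff_distrib)
  finally show ?thesis .
qed

section \<open>Survival functions on the closed orthant\<close>

lemma UN_all_less_plus_inverse:
  fixes X :: "nat \<Rightarrow> 'a \<Rightarrow> real"
  shows "(\<Union>m. {\<omega>\<in>S. \<forall>i<n. x i + inverse (real (Suc m)) < X i \<omega>}) = {\<omega>\<in>S. \<forall>i<n. x i < X i \<omega>}"
proof safe
  fix \<omega> m i assume "\<forall>i<n. x i + inverse (real (Suc m)) < X i \<omega>" "i < n"
  then have "x i + inverse (real (Suc m)) < X i \<omega>" by blast
  moreover have "0 < inverse (real (Suc m))" by simp
  ultimately show "x i < X i \<omega>" by linarith
next
  fix \<omega> assume \<omega>: "\<omega> \<in> S" "\<forall>i<n. x i < X i \<omega>"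
  have "\<forall>\<^sub>F m in sequentially. \<forall>i\<in>{..<n}. inverse (real (Suc m)) < X i \<omega> - x i"
    using \<omega>(2) by (intro eventually_ball_finite ballI order_tendstoD(2)[OF LIMSEQ_inverse_real_of_nat]) auto
  then obtain m where "\<forall>i<n. inverse (real (Suc m)) < X i \<omega> - x i"
    by (auto simp: eventually_sequentially)
  with \<omega>(1) show "\<omega> \<in> (\<Union>m. {\<omega>\<in>S. \<forall>i<n. x i + inverse (real (Suc m)) < X i \<omega>})"
    by (auto simp: algebra_simps)
qed

lemma measure_all_less_eq_lim:
  fixes X :: "nat \<Rightarrow> 'a \<Rightarrow> real" and F :: "(nat \<Rightarrow> real) \<Rightarrow> real"
  assumes M: "finite_measure M" and X: "\<And>i. i < n \<Longrightarrow> X i \<in> borel_measurable M"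
    and F: "\<And>y. (\<forall>i<n. 0 < y i) \<Longrightarrow> measure M {\<omega>\<in>space M. \<forall>i<n. y i < X i \<omega>} = F y"
    and F_lim: "(\<lambda>m. F (\<lambda>i. x i + inverse (real (Suc m)))) \<longlonglongrightarrow> F x"
    and x: "\<And>i. i < n \<Longrightarrow> 0 \<le> x i"
  shows "measure M {\<omega>\<in>space M. \<forall>i<n. x i < X i \<omega>} = F x"
proof -
  interpret finite_measure M by fact
  define A where "A m = {\<omega>\<in>space M. \<forall>i<n. x i + inverse (real (Suc m)) < X i \<omega>}" for m
  have "range A \<subseteq> sets M"
  proof safe
    fix m
    have "\<And>i. i \<in> {..<n} \<Longrightarrow> {\<omega>\<in>space M. x i + inverse (real (Suc m)) < X i \<omega>} \<in> sets M"
      using X by measurable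
    then have "{\<omega>\<in>space M. \<forall>i\<in>{..<n}. x i + inverse (real (Suc m)) < X i \<omega>} \<in> sets M"
      by (intro sets.sets_Collect_finite_All) auto
    then show "A m \<in> sets M"
      unfolding A_def by (simp only: Ball_def lessThan_iff)
  qed
  moreover have "incseq A"
  proof (rule incseq_SucI)
    fix m
    have "inverse (real (Suc (Suc m))) \<le> inverse (real (Suc m))"
      by (rule le_imp_inverse_le) auto
    then show "A m \<subseteq> A (Suc m)"
      unfolding A_def using add_left_mono le_less_trans by blast
  qed
  ultimately have "(\<lambda>m. measure M (A m)) \<longlonglongrightarrow> measure M (\<Union>m. A m)"
    by (rule finite_Lim_measure_incseq)
  also have "(\<Union>m. A m) = {\<omega>\<in>space M. \<forall>i<n. x i < X i \<omega>}"
    unfolding A_def by (rule UN_all_less_plus_inverse)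
  moreover have "measure M (A m) = F (\<lambda>i. x i + inverse (real (Suc m)))" for m
    unfolding A_def using x by (intro F) (simp add: add_nonneg_pos)
  ultimately show ?thesis
    using F_lim by (simp add: LIMSEQ_unique)
qed

section \<open>The multivariate Pareto model\<close>

locale multivariate_pareto = prob_space M
  for M :: "'a measure" and n :: nat and c :: "nat \<Rightarrow> nat \<Rightarrow> real"
    and \<sigma> \<gamma> :: "nat \<Rightarrow> real" and X :: "nat \<Rightarrow> 'a \<Rightarrow> real" +
  assumes c_01: "\<And>i j. i < n \<Longrightarrow> j < n + 1 \<Longrightarrow> c i j \<in> {0, 1}"
    and \<sigma>_pos: "\<And>i. i < n \<Longrightarrow> \<sigma> i > 0"
    and \<gamma>_pos: "\<And>j. j < n + 1 \<Longrightarrow> \<gamma> j > 0"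
    and X_measurable: "\<And>i. i < n \<Longrightarrow> X i \<in> borel_measurable M"
    and survival_pos: "\<And>x. (\<forall>i<n. x i > 0) \<Longrightarrow>
           measure M {\<omega> \<in> space M. \<forall>i<n. X i \<omega> > x i}
             = (\<Prod>j<n + 1. (1 + (\<Sum>i<n. c i j / \<sigma> i * x i)) powr (- \<gamma> j))"
begin

definition tail_index :: "nat \<Rightarrow> real" where
  "tail_index i = (\<Sum>j<n + 1. c i j * \<gamma> j)"

lemma survival:
  assumes "\<And>i. i < n \<Longrightarrow> 0 \<le> x i"
  shows "measure M {\<omega> \<in> space M. \<forall>i<n. x i < X i \<omega>}
           = (\<Prod>j<n + 1. (1 + (\<Sum>i<n. c i j / \<sigma> i * x i)) powr - \<gamma> j)"
proof (rule measure_all_less_eq_lim[OF finite_measure_axioms X_measurable])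
  show "(\<lambda>m. \<Prod>j<n + 1. (1 + (\<Sum>i<n. c i j / \<sigma> i * (x i + inverse (real (Suc m))))) powr - \<gamma> j)
      \<longlonglongrightarrow> (\<Prod>j<n + 1. (1 + (\<Sum>i<n. c i j / \<sigma> i * x i)) powr - \<gamma> j)"
  proof (intro tendsto_prod tendsto_powr tendsto_const tendsto_add tendsto_sum tendsto_mult)
    show "(\<lambda>m. x i + inverse (real (Suc m))) \<longlonglongrightarrow> x i" for i
      using tendsto_add[OF tendsto_const LIMSEQ_inverse_real_of_nat, of "x i"] by simp
    fix j assume "j \<in> {..<n + 1}"
    then have "0 \<le> (\<Sum>i<n. c i j / \<sigma> i * x i)"
      using c_01 \<sigma>_pos assms by (intro sum_nonneg mult_nonneg_nonneg divide_nonneg_pos) force+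
    then show "1 + (\<Sum>i<n. c i j / \<sigma> i * x i) \<noteq> 0"
      by linarith
  qed
qed (simp_all add: survival_pos assms)

lemma AE_X_pos: "AE \<omega> in M. \<forall>i<n. 0 < X i \<omega>"
proof -
  have "\<And>i. i \<in> {..<n} \<Longrightarrow> {\<omega>\<in>space M. 0 < X i \<omega>} \<in> events"
    using X_measurable by measurable
  then have "{\<omega>\<in>space M. \<forall>i\<in>{..<n}. 0 < X i \<omega>} \<in> events"
    by (intro sets.sets_Collect_finite_All) auto
  then have ev: "{\<omega>\<in>space M. \<forall>i<n. 0 < X i \<omega>} \<in> events"
    by (simp only: Ball_def lessThan_iff)
  have "prob {\<omega>\<in>space M. \<forall>i<n. 0 < X i \<omega>} = 1"
    using survival[of "\<lambda>_. 0"] by simp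
  then show ?thesis
    using prob_Collect_eq_1[OF ev] by simp
qed

lemma survival_subset:
  assumes I: "I \<subseteq> {..<n}" and x: "\<And>i. i \<in> I \<Longrightarrow> 0 \<le> x i"
  shows "measure M {\<omega>\<in>space M. \<forall>i\<in>I. x i < X i \<omega>}
           = (\<Prod>j<n + 1. (1 + (\<Sum>i\<in>I. c i j / \<sigma> i * x i)) powr - \<gamma> j)"
proof -
  define y where "y i = (if i \<in> I then x i else 0)" for i
  have "{\<omega>\<in>space M. x i < X i \<omega>} \<in> events" if "i \<in> I" for i
  proof -
    have "X i \<in> borel_measurable M"
      using I X_measurable that by auto
    then show ?thesis
      by measurable
  qed
  then have ev_I: "{\<omega>\<in>space M. \<forall>i\<in>I. x i < X i \<omega>} \<in> events"
    using finite_subset[OF I finite_lessThan] by (rule sets.sets_Collect_finite_All)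
  have "\<And>i. i \<in> {..<n} \<Longrightarrow> {\<omega>\<in>space M. y i < X i \<omega>} \<in> events"
    using X_measurable by measurable
  then have "{\<omega>\<in>space M. \<forall>i\<in>{..<n}. y i < X i \<omega>} \<in> events"
    by (intro sets.sets_Collect_finite_All) auto
  then have ev_n: "{\<omega>\<in>space M. \<forall>i<n. y i < X i \<omega>} \<in> events"
    by (simp only: Ball_def lessThan_iff)
  have "AE \<omega> in M. (\<forall>i\<in>I. x i < X i \<omega>) \<longleftrightarrow> (\<forall>i<n. y i < X i \<omega>)"
    using AE_X_pos by eventually_elim (use I in \<open>auto simp: y_def subset_iff\<close>)
  then have "prob {\<omega>\<in>space M. \<forall>i\<in>I. x i < X i \<omega>} = prob {\<omega>\<in>space M. \<forall>i<n. y i < X i \<omega>}"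
    using ev_I ev_n by (rule prob_eq_AE)
  also have "\<dots> = (\<Prod>j<n + 1. (1 + (\<Sum>i<n. c i j / \<sigma> i * y i)) powr - \<gamma> j)"
    using x by (intro survival) (simp add: y_def)
  also have "\<dots> = (\<Prod>j<n + 1. (1 + (\<Sum>i\<in>I. c i j / \<sigma> i * x i)) powr - \<gamma> j)"
  proof -
    have "(\<Sum>i<n. c i j / \<sigma> i * y i) = (\<Sum>i\<in>I. c i j / \<sigma> i * x i)" for j
    proof -
      have "(\<Sum>i<n. c i j / \<sigma> i * y i) = (\<Sum>i\<in>I. c i j / \<sigma> i * y i)"
        using I by (intro sum.mono_neutral_right) (auto simp: y_def)
      then show ?thesis
        by (simp add: y_def)
    qed
    then show ?thesis
      by simp
  qed
  finally show ?thesis .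
qed

lemma lomax_distributed_standardized:
  assumes k: "k < n"
  shows "lomax_distributed M (\<lambda>\<omega>. X k \<omega> / \<sigma> k) (tail_index k)"
  unfolding lomax_distributed_def
proof safe
  show "(\<lambda>\<omega>. X k \<omega> / \<sigma> k) \<in> borel_measurable M"
    using X_measurable[OF k] by measurable
  fix u :: real assume u: "0 \<le> u"
  have "{\<omega>\<in>space M. u < X k \<omega> / \<sigma> k} = {\<omega>\<in>space M. \<forall>i\<in>{k}. u * \<sigma> k < X i \<omega>}"
    using \<sigma>_pos[OF k] by (auto simp: pos_less_divide_eq)
  also have "measure M \<dots> = (\<Prod>j<n + 1. (1 + c k j * u) powr - \<gamma> j)"
    using k u \<sigma>_pos[OF k] by (subst survival_subset) auto
  also have "\<dots> = (1 + u) powr - tail_index k"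
    unfolding tail_index_def using k u c_01 by (intro prod_powr_neg_01) auto
  finally show "measure M {\<omega>\<in>space M. u < X k \<omega> / \<sigma> k} = (1 + u) powr - tail_index k" .
qed

lemma joint_survival_standardized:
  assumes kl: "k < n" "l < n" "k \<noteq> l" and uv: "0 \<le> u" "0 \<le> v"
  shows "measure M {\<omega>\<in>space M. u < X k \<omega> / \<sigma> k \<and> v < X l \<omega> / \<sigma> l}
           = (\<Prod>j<n + 1. (1 + c k j * u + c l j * v) powr - \<gamma> j)"
proof -
  define x where "x i = (if i = k then u * \<sigma> k else v * \<sigma> l)" for i
  have "{\<omega>\<in>space M. u < X k \<omega> / \<sigma> k \<and> v < X l \<omega> / \<sigma> l} = {\<omega>\<in>space M. \<forall>i\<in>{k, l}. x i < X i \<omega>}"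
    using \<sigma>_pos kl by (auto simp: x_def pos_less_divide_eq)
  also have "measure M \<dots> = (\<Prod>j<n + 1. (1 + (\<Sum>i\<in>{k, l}. c i j / \<sigma> i * x i)) powr - \<gamma> j)"
    using kl uv \<sigma>_pos[OF kl(1)] \<sigma>_pos[OF kl(2)] by (intro survival_subset) (auto simp: x_def)
  also have "\<dots> = (\<Prod>j<n + 1. (1 + c k j * u + c l j * v) powr - \<gamma> j)"
    using kl \<sigma>_pos[OF kl(1)] \<sigma>_pos[OF kl(2)] by (simp add: x_def add.assoc)
  finally show ?thesis .
qed

lemma pearson_corr_bounds_ordered:
  assumes kl: "k < n" "l < n" "k \<noteq> l" and "2 < tail_index k" "tail_index k \<le> tail_index l"
  shows "0 \<le> pearson_corr M (X k) (X l) \<and> pearson_corr M (X k) (X l) < 1 / 2"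
proof -
  have "X i = (\<lambda>\<omega>. \<sigma> i * (X i \<omega> / \<sigma> i))" if "i < n" for i
    using \<sigma>_pos[OF that] by auto
  then have "pearson_corr M (X k) (X l) = pearson_corr M (\<lambda>\<omega>. X k \<omega> / \<sigma> k) (\<lambda>\<omega>. X l \<omega> / \<sigma> l)"
    using kl \<sigma>_pos by (metis pearson_corr_scale)
  moreover have "0 \<le> pearson_corr M (\<lambda>\<omega>. X k \<omega> / \<sigma> k) (\<lambda>\<omega>. X l \<omega> / \<sigma> l)
      \<and> pearson_corr M (\<lambda>\<omega>. X k \<omega> / \<sigma> k) (\<lambda>\<omega>. X l \<omega> / \<sigma> l) < 1 / 2"
  proof (rule pearson_corr_lomax_pair[OF prob_space_axioms lomax_distributed_standardized[OF kl(1)]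
        lomax_distributed_standardized[OF kl(2)] assms(4,5)])
    fix u v :: real assume uv: "0 \<le> u" "0 \<le> v"
    have c: "\<And>j. j \<in> {..<n + 1} \<Longrightarrow> c k j \<in> {0, 1}" "\<And>j. j \<in> {..<n + 1} \<Longrightarrow> c l j \<in> {0, 1}"
      and \<gamma>: "\<And>j. j \<in> {..<n + 1} \<Longrightarrow> 0 \<le> \<gamma> j"
      using kl c_01 \<gamma>_pos by (auto intro: less_imp_le)
    show "(1 + u) powr - tail_index k * (1 + v) powr - tail_index l
        \<le> measure M {\<omega>\<in>space M. u < X k \<omega> / \<sigma> k \<and> v < X l \<omega> / \<sigma> l}"
      unfolding joint_survival_standardized[OF kl uv] tail_index_def
      using prod_powr_neg_01_lower[OF finite_lessThan c \<gamma> uv] .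
    show "measure M {\<omega>\<in>space M. u < X k \<omega> / \<sigma> k \<and> v < X l \<omega> / \<sigma> l}
        \<le> (1 + v) powr (tail_index k - tail_index l) * (1 + v + u) powr - tail_index k"
      unfolding joint_survival_standardized[OF kl uv] tail_index_def
      using prod_powr_neg_01_upper[OF finite_lessThan c \<gamma> uv] .
  qed
  ultimately show ?thesis
    by simp
qed

end

theorem corollary3p1:
  fixes M :: "'a measure" and n :: nat
    and c :: "nat \<Rightarrow> nat \<Rightarrow> real"
    and \<sigma> \<gamma> :: "nat \<Rightarrow> real"
    and X :: "nat \<Rightarrow> 'a \<Rightarrow> real"
    and k l :: nat
  assumes "prob_space M"
    and "n \<ge> 2"
    and "\<And>i j. i < n \<Longrightarrow> j < n + 1 \<Longrightarrow> c i j \<in> {0, 1}"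
    and "\<And>i. i < n \<Longrightarrow> \<sigma> i > 0"
    and "\<And>j. j < n + 1 \<Longrightarrow> \<gamma> j > 0"
    and "\<And>i. i < n \<Longrightarrow> X i \<in> borel_measurable M"
    and "\<And>x. (\<forall>i<n. x i > 0) \<Longrightarrow>
           measure M {\<omega> \<in> space M. \<forall>i<n. X i \<omega> > x i}
             = (\<Prod>j<n + 1. (1 + (\<Sum>i<n. c i j / \<sigma> i * x i)) powr (- \<gamma> j))"
    and "k < n" and "l < n" and "k \<noteq> l"
    and "(\<Sum>j<n + 1. c k j * \<gamma> j) > 2"
    and "(\<Sum>j<n + 1. c l j * \<gamma> j) > 2"
  shows "0 \<le> pearson_corr M (X k) (X l) \<and> pearson_corr M (X k) (X l) < 1 / 2"
proof -
  interpret multivariate_pareto M n c \<sigma> \<gamma> X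
    by (rule multivariate_pareto.intro[OF assms(1) multivariate_pareto_axioms.intro]) (fact assms)+
  have tail: "2 < tail_index k" "2 < tail_index l"
    using assms(11,12) by (simp_all add: tail_index_def)
  consider "tail_index k \<le> tail_index l" | "tail_index l \<le> tail_index k"
    by linarith
  then show ?thesis
  proof cases
    case 1
    then show ?thesis
      using assms(8-10) tail by (intro pearson_corr_bounds_ordered)
  next
    case 2
    then show ?thesis
      using pearson_corr_bounds_ordered[of l k] assms(8-10) tail by (simp add: pearson_corr_commute)
  qed
qed

end
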